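(* The maximal number of periods that an active candidate will be in the work state is $\lg_X{n}$.
   Context: A broadcast network is modeled as a connected graph G(V,E) with n nodes. In the fragment-level leader election algorithm, nodes are partitioned into fragments each with a candidate; id(F) = (size, candidate identity) ordered lexicographically; external edges are directed from the larger-id to the smaller-id fragment. Initially each node is a size-1 fragment in state wait. A fragment whose external edges are all incoming enters work, counts its size new_size, and compares with its maximal neighbor F': if new_size > X · size(F') (X > 1) it remains active, updates its size, makes its external edges outgoing and returns to wait; otherwise it joins F'. A fragment with no external edges is the leader. It has been shown that if a fragment enters the work state at two consecutive times and remains active, with known size k_i at the first entry and size k_{i+1} after counting at the second, then k_{i+1} ≥ X^2 · k_i. *)

theory Defs
  imports Complex_Main
begin

end

theory Submission
  imports Defs
begin

text \<open>The first active size already exceeds X (it beats X times a nonempty neighbour) and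
  each later one is at least X^2 times its predecessor, so the k-th active size exceeds
  X^(2k+1) \<ge> X^(k+1); as no size exceeds n, X^m \<le> n.\<close>

lemma geometric_growth_lower_bound:
  fixes a :: "nat \<Rightarrow> real" and q :: real
  assumes "q \<ge> 0"
    and growth: "\<And>i. Suc i < m \<Longrightarrow> a (Suc i) \<ge> q * a i"
    and "i < m"
  shows "a i \<ge> q ^ i * a 0"
  using \<open>i < m\<close>
proof (induction i)
  case 0
  then show ?case by simp
next
  case (Suc i)
  have "q ^ Suc i * a 0 = q * (q ^ i * a 0)" by simp
  also have "\<dots> \<le> q * a i" using Suc \<open>q \<ge> 0\<close> by (simp add: mult_left_mono)
  also have "\<dots> \<le> a (Suc i)" using growth Suc.prems .
  finally show ?case .
qed

lemma le_log_of_power_le: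
  fixes b x :: real
  assumes "b > 1" and "b ^ k \<le> x"
  shows "real k \<le> log b x"
proof -
  have "x > 0" using assms by (meson less_le_trans less_trans zero_less_one zero_less_power)
  then show ?thesis
    using assms by (simp add: le_log_iff powr_realpow)
qed

theorem corollary5:
  fixes X :: real and n m :: nat
    and s :: "nat \<Rightarrow> nat"   \<comment> \<open>s i = size counted in the i-th work period in which the candidate remains active\<close>
    and nb :: "nat \<Rightarrow> nat"  \<comment> \<open>nb i = size of the maximal neighbouring fragment in that period\<close>
  assumes X: "X > 1"
    and n: "n \<ge> 1"
    and active: "\<And>i. i < m \<Longrightarrow> nb i \<ge> 1 \<and> real (s i) > X * real (nb i)"
    and bounded: "\<And>i. i < m \<Longrightarrow> s i \<le> n"
    and growth: "\<And>i. Suc i < m \<Longrightarrow> real (s (Suc i)) \<ge> X\<^sup>2 * real (s i)"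
  shows "real m \<le> log X (real n)"
proof (cases m)
  case 0
  then show ?thesis using n X by simp
next
  case (Suc k)
  have "real (nb 0) \<ge> 1" "real (s 0) > X * real (nb 0)" using active[of 0] Suc by auto
  then have first_exceeds_X: "real (s 0) > X"
    using X by (smt (verit) mult_le_cancel_left1)
  have "X ^ m = X * X ^ k" using Suc by simp
  also have "\<dots> \<le> X * (X\<^sup>2) ^ k"
    using X by (simp add: power_increasing flip: power_mult)
  also have "\<dots> < (X\<^sup>2) ^ k * real (s 0)"
    using first_exceeds_X X by simp
  also have "\<dots> \<le> real (s k)"
    using geometric_growth_lower_bound[of "X\<^sup>2" m "\<lambda>i. real (s i)" k] growth Suc by simp
  also have "\<dots> \<le> real n" using bounded Suc by simp
  finally show ?thesis using X by (intro le_log_of_power_le) simp_all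
qed

end
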